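(* Let $n\ge 1$ be an integer and $x\in\mathbb{R}$, and let $z_1(x),\ldots,z_n(x)$ be the zeros (listed with multiplicity) of the normalized associated Legendre function $\psi_n(x,z)=\Gamma(1-z)P_n^z(\tanh x)$ with respect to $z$, as defined in the context. Then for each $\ell=1,\ldots,n$, $$\prod_{j=1}^n \bigl(\ell - z_j(x)\bigr) = (-1)^{n-\ell}\, e^{-2\ell x}\prod_{j=1}^n \bigl(\ell + z_j(x)\bigr),$$ i.e. whenever the denominators are nonzero, $$\prod_{j=1}^n \frac{\ell-z_j(x)}{\ell+z_j(x)} = (-1)^{n-\ell}\exp(-2\ell x),\qquad \ell=1,\ldots,n.$$
   Context: Fix an integer $n\ge1$. For $x\in\mathbb{R}$ and $z\in\mathbb{C}\setminus\{1,\ldots,n\}$ define $$\psi_n(x,z)=\frac{e^{zx}}{(1+e^{-2x})^n}\sum_{m=0}^n e^{-2mx}\binom{n}{m}\prod_{j=1}^m\frac{z+n+1-j}{z-j},$$ which equals $\Gamma(1-z)P_n^z(\tanh x)$, where $P_n^z$ is the associated Legendre function of degree $n$ and order $z$ and $\Gamma$ is the Euler gamma function. For each $x$, the polynomial $Q_x(z)=\sum_{m=0}^n e^{-2mx}\binom{n}{m}\prod_{j=1}^m(z+n+1-j)\prod_{k=m+1}^n(z-k)$ has degree $n$ with leading coefficient $(1+e^{-2x})^n$; its roots (with multiplicity) are denoted $z_1(x),\ldots,z_n(x)$, so that $\psi_n(x,z)=\frac{e^{zx}}{(1+e^{-2x})^n}\prod_{j=1}^n\frac{z-z_j(x)}{z-j}$.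 These are called the zeros of $\psi_n(x,\cdot)$. *)

theory Defs
  imports "HOL-Analysis.Analysis" "HOL-Computational_Algebra.Polynomial"
begin

definition Qpoly :: "nat \<Rightarrow> real \<Rightarrow> complex poly" where
  "Qpoly n x = (\<Sum>m\<in>{0..n}.
     smult (complex_of_real (exp (-2 * real m * x)) * of_nat (n choose m))
       ((\<Prod>j\<in>{1..m}. [: of_nat (n + 1 - j), 1 :]) *
        (\<Prod>k\<in>{m+1..n}. [: - of_nat k, 1 :])))"

text \<open>zs is the list of zeros of psi_n(x,.), i.e. of Q_x, listed with multiplicity:
  Q_x(z) = (1 + e^{-2x})^n * prod_j (z - z_j).\<close>
definition is_zero_list :: "nat \<Rightarrow> real \<Rightarrow> complex list \<Rightarrow> bool" where
  "is_zero_list n x zs \<longleftrightarrow> length zs = n \<and>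
     Qpoly n x = smult (complex_of_real ((1 + exp (-2 * x)) ^ n))
                   (\<Prod>z\<leftarrow>zs. [: - z, 1 :])"

end

theory Submission
  imports Defs
begin

text \<open>Write \<open>Q_x(z) = \<Sum>\<^sub>m e^(-2mx) T_m(z)\<close> with \<open>T_m = Qpoly_summand n m\<close>.
  For an integer \<open>a\<close> with \<open>|a| \<le> n\<close> the summand \<open>T_m(a)\<close> vanishes unless
  \<open>max 0 a \<le> m \<le> min n (n + a)\<close>, and then equals
  \<open>(-1)^(n-m) n! (n+a)! (n-a)! / (m! (n-m)! (n+a-m)! (m-a)!)\<close>.
  This expression is symmetric enough to give \<open>T_(m+l)(l) = (-1)^l T_m(-l)\<close>, so shifting the
  summation index by \<open>l\<close> yields \<open>Q_x(l) = (-1)^l e^(-2lx) Q_x(-l)\<close>. Factoring \<open>Q_x\<close>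
  through its zeros turns this into the claim.\<close>

lemma prod_of_nat_atLeastAtMost_eq_fact_div:
  assumes "a \<le> b"
  shows "(\<Prod>k\<in>{Suc a..b}. of_nat k :: 'a::field_char_0) = fact b / fact a"
proof -
  have "(fact b :: 'a) = fact a * of_nat (\<Prod>{Suc a..b})"
    using fact_eq_fact_times[OF assms] by (metis of_nat_fact of_nat_mult)
  then show ?thesis by (simp add: of_nat_prod)
qed

lemma prod_of_nat_add_eq_fact_div:
  assumes "m \<le> n"
  shows "(\<Prod>k\<in>{Suc m..n}. of_nat (k + c) :: 'a::field_char_0) = fact (n + c) / fact (m + c)"
proof -
  have "(\<Prod>k\<in>{Suc m..n}. of_nat (k + c) :: 'a) = (\<Prod>k\<in>{Suc m + c..n + c}. of_nat k)"
    by (rule prod.shift_bounds_cl_nat_ivl[symmetric])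
  also have "\<dots> = fact (n + c) / fact (m + c)"
    using assms prod_of_nat_atLeastAtMost_eq_fact_div[of "m + c" "n + c"] by simp
  finally show ?thesis .
qed

lemma prod_of_nat_diff_eq_fact_div:
  assumes "b \<le> m" "m \<le> n"
  shows "(\<Prod>k\<in>{Suc m..n}. of_nat (k - b) :: 'a::field_char_0) = fact (n - b) / fact (m - b)"
proof -
  have "(\<Prod>k\<in>{Suc m..n}. of_nat (k - b) :: 'a) = (\<Prod>k\<in>{Suc (m - b)..n - b}. of_nat (k + b - b))"
    using assms prod.shift_bounds_cl_nat_ivl[of "\<lambda>k. of_nat (k - b) :: 'a" "Suc (m - b)" b "n - b"]
    by simp
  also have "\<dots> = fact (n - b) / fact (m - b)"
    using assms prod_of_nat_atLeastAtMost_eq_fact_div[of "m - b" "n - b", where 'a='a] by simp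
  finally show ?thesis .
qed

lemma prod_of_nat_falling_eq_fact_div:
  assumes "m \<le> a"
  shows "(\<Prod>j\<in>{1..m}. of_nat (a + 1 - j) :: 'a::field_char_0) = fact a / fact (a - m)"
proof -
  have "(\<Prod>j\<in>{1..m}. of_nat (a + 1 - j) :: 'a) = (\<Prod>j\<in>{1..m}. of_nat (a + 1 - (m + 1 - j)))"
    by (rule prod.atLeastAtMost_rev)
  also have "\<dots> = (\<Prod>j\<in>{Suc 0..m}. of_nat (j + (a - m)))"
    using assms by (intro prod.cong) auto
  also have "\<dots> = fact a / fact (a - m)"
    using assms prod_of_nat_add_eq_fact_div[of 0 m "a - m"] by simp
  finally show ?thesis .
qed

definition Qpoly_summand :: "nat \<Rightarrow> nat \<Rightarrow> complex \<Rightarrow> complex" where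
  "Qpoly_summand n m z =
     of_nat (n choose m) * (\<Prod>j\<in>{1..m}. z + of_nat (n + 1 - j)) * (\<Prod>k\<in>{Suc m..n}. z - of_nat k)"

lemma poly_Qpoly_eq_sum:
  "poly (Qpoly n x) z = (\<Sum>m\<in>{0..n}. complex_of_real (exp (-2 * real m * x)) * Qpoly_summand n m z)"
  unfolding Qpoly_def Qpoly_summand_def by (simp add: poly_sum poly_prod ac_simps)

lemma Qpoly_summand_of_nat_eq_0:
  assumes "m < l" "l \<le> n"
  shows "Qpoly_summand n m (of_nat l) = 0"
  using assms unfolding Qpoly_summand_def by (auto simp: prod_zero_iff intro!: bexI[of _ l])

lemma Qpoly_summand_neg_of_nat_eq_0:
  assumes "n < m + l" "l \<le> n"
  shows "Qpoly_summand n m (- of_nat l) = 0"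
  using assms unfolding Qpoly_summand_def by (auto simp: prod_zero_iff of_nat_diff intro!: bexI[of _ "n + 1 - l"])

lemma Qpoly_summand_of_nat:
  assumes "l \<le> m" "m \<le> n"
  shows "Qpoly_summand n m (of_nat l) = (-1) ^ (n - m) * (fact n * fact (n + l) * fact (n - l))
           / (fact m * fact (n - m) * fact (n + l - m) * fact (m - l))"
proof -
  have "(\<Prod>j\<in>{1..m}. of_nat l + of_nat (n + 1 - j) :: complex) = (\<Prod>j\<in>{1..m}. of_nat (n + l + 1 - j))"
    using assms by (intro prod.cong) auto
  also have "\<dots> = fact (n + l) / fact (n + l - m)"
    using assms by (intro prod_of_nat_falling_eq_fact_div) auto
  finally have rising:
    "(\<Prod>j\<in>{1..m}. of_nat l + of_nat (n + 1 - j) :: complex) = fact (n + l) / fact (n + l - m)" .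
  have "(\<Prod>k\<in>{Suc m..n}. of_nat l - of_nat k :: complex) = (\<Prod>k\<in>{Suc m..n}. - of_nat (k - l))"
    using assms by (intro prod.cong) (auto simp: of_nat_diff)
  also have "\<dots> = (-1) ^ (n - m) * (fact (n - l) / fact (m - l))"
    using assms by (simp only: prod_uminus prod_of_nat_diff_eq_fact_div card_atLeastAtMost) simp
  finally have falling:
    "(\<Prod>k\<in>{Suc m..n}. of_nat l - of_nat k :: complex) = (-1) ^ (n - m) * (fact (n - l) / fact (m - l))" .
  show ?thesis
    using assms unfolding Qpoly_summand_def rising falling by (simp add: binomial_fact field_simps)
qed

lemma Qpoly_summand_neg_of_nat:
  assumes "m + l \<le> n"
  shows "Qpoly_summand n m (- of_nat l) = (-1) ^ (n - m) * (fact n * fact (n + l) * fact (n - l))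
           / (fact m * fact (n - m) * fact (n - l - m) * fact (m + l))"
proof -
  have "(\<Prod>j\<in>{1..m}. - of_nat l + of_nat (n + 1 - j) :: complex) = (\<Prod>j\<in>{1..m}. of_nat (n - l + 1 - j))"
    using assms by (intro prod.cong) (auto simp: of_nat_diff)
  also have "\<dots> = fact (n - l) / fact (n - l - m)"
    using assms by (intro prod_of_nat_falling_eq_fact_div) auto
  finally have rising:
    "(\<Prod>j\<in>{1..m}. - of_nat l + of_nat (n + 1 - j) :: complex) = fact (n - l) / fact (n - l - m)" .
  have "(\<Prod>k\<in>{Suc m..n}. - of_nat l - of_nat k :: complex) = (\<Prod>k\<in>{Suc m..n}. - of_nat (k + l))"
    by (intro prod.cong) auto
  also have "\<dots> = (-1) ^ (n - m) * (fact (n + l) / fact (m + l))"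
    using assms by (simp only: prod_uminus prod_of_nat_add_eq_fact_div card_atLeastAtMost) simp
  finally have falling:
    "(\<Prod>k\<in>{Suc m..n}. - of_nat l - of_nat k :: complex) = (-1) ^ (n - m) * (fact (n + l) / fact (m + l))" .
  show ?thesis
    using assms unfolding Qpoly_summand_def rising falling by (simp add: binomial_fact field_simps)
qed

lemma Qpoly_summand_shift:
  assumes "m + l \<le> n"
  shows "Qpoly_summand n (m + l) (of_nat l) = (-1) ^ l * Qpoly_summand n m (- of_nat l)"
proof -
  have "(-1 :: complex) ^ (n - m) = (-1) ^ (n - (m + l)) * (-1) ^ l"
    using assms by (simp flip: power_add)
  moreover have "n + l - (m + l) = n - m" "n - (m + l) = n - l - m"
    using assms by auto
  ultimately show ?thesis
    using assms by (simp add: Qpoly_summand_of_nat Qpoly_summand_neg_of_nat mult_ac)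
qed

lemma poly_Qpoly_of_nat_eq_neg:
  assumes "l \<le> n"
  shows "poly (Qpoly n x) (of_nat l)
       = (-1) ^ l * complex_of_real (exp (-2 * real l * x)) * poly (Qpoly n x) (- of_nat l)"
proof -
  let ?e = "\<lambda>m. complex_of_real (exp (-2 * real m * x))"
  have e_add: "?e (m + l) = ?e l * ?e m" for m
    by (simp add: algebra_simps flip: exp_add of_real_mult)
  have "poly (Qpoly n x) (of_nat l)
      = (\<Sum>m\<in>{0 + l..(n - l) + l}. ?e m * Qpoly_summand n m (of_nat l))"
    unfolding poly_Qpoly_eq_sum using assms
    by (intro sum.mono_neutral_right) (auto simp: Qpoly_summand_of_nat_eq_0)
  also have "\<dots> = (\<Sum>m\<in>{0..n - l}. ?e (m + l) * Qpoly_summand n (m + l) (of_nat l))"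
    by (rule sum.shift_bounds_cl_nat_ivl)
  also have "\<dots> = (-1) ^ l * ?e l * (\<Sum>m\<in>{0..n - l}. ?e m * Qpoly_summand n m (- of_nat l))"
    unfolding sum_distrib_left
  proof (intro sum.cong refl)
    fix m assume "m \<in> {0..n - l}"
    then have "m + l \<le> n"
      using assms by simp
    then show "?e (m + l) * Qpoly_summand n (m + l) (of_nat l)
        = (-1) ^ l * ?e l * (?e m * Qpoly_summand n m (- of_nat l))"
      unfolding e_add Qpoly_summand_shift[OF \<open>m + l \<le> n\<close>] by (simp only: mult_ac)
  qed
  also have "(\<Sum>m\<in>{0..n - l}. ?e m * Qpoly_summand n m (- of_nat l)) = poly (Qpoly n x) (- of_nat l)"
    unfolding poly_Qpoly_eq_sum using assms
    by (intro sum.mono_neutral_left) (auto simp: Qpoly_summand_neg_of_nat_eq_0)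
  finally show ?thesis .
qed

lemma poly_prod_list_linear:
  "poly (\<Prod>z\<leftarrow>zs. [: - z, 1 :]) w = (\<Prod>z\<leftarrow>zs. w - z :: 'a::comm_ring_1)"
  by (induction zs) (auto simp: algebra_simps)

lemma prod_list_add_eq_neg_diff:
  "(\<Prod>z\<leftarrow>zs. a + z) = (-1) ^ length zs * (\<Prod>z\<leftarrow>zs. - a - z :: 'a::comm_ring_1)"
  by (induction zs) (auto simp: algebra_simps)

theorem proposition1:
  fixes n :: nat and x :: real and zs :: "complex list" and l :: nat
  assumes "n \<ge> 1"
    and "is_zero_list n x zs"
    and "1 \<le> l" and "l \<le> n"
  shows "(\<Prod>z\<leftarrow>zs. of_nat l - z)
       = (-1) ^ (n - l) * complex_of_real (exp (-2 * real l * x)) * (\<Prod>z\<leftarrow>zs. of_nat l + z)"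
proof -
  define c where "c = complex_of_real ((1 + exp (-2 * x)) ^ n)"
  have "c \<noteq> 0"
    unfolding c_def of_real_eq_0_iff by (smt (verit) exp_gt_zero zero_less_power)
  have len: "length zs = n" and Q: "\<And>w. poly (Qpoly n x) w = c * (\<Prod>z\<leftarrow>zs. w - z)"
    using assms(2) unfolding is_zero_list_def c_def by (auto simp: poly_prod_list_linear)
  have "(-1 :: complex) ^ n = (-1) ^ (n - l) * (-1) ^ l"
    using assms(4) by (simp flip: power_add)
  then have sign: "(-1 :: complex) ^ l * (-1) ^ n = (-1) ^ (n - l)"
    by (simp add: mult_ac)
  have "(\<Prod>z\<leftarrow>zs. of_nat l - z)
      = (-1) ^ l * complex_of_real (exp (-2 * real l * x)) * (\<Prod>z\<leftarrow>zs. - of_nat l - z)"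
    using poly_Qpoly_of_nat_eq_neg[OF assms(4), of x] \<open>c \<noteq> 0\<close> by (simp add: Q)
  also have "\<dots> = (-1) ^ (n - l) * complex_of_real (exp (-2 * real l * x)) * (\<Prod>z\<leftarrow>zs. of_nat l + z)"
    by (simp add: prod_list_add_eq_neg_diff len flip: sign)
  finally show ?thesis .
qed

end
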